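(* Let $a>0$, $\tau>0$ with $\tau\le a$. Then every eigenvalue $\lambda\in\mathbb{C}$ of $\mathcal{A}$ satisfies $\Re\lambda<0$.
   Context: Let $H_1$ and $H$ be Hilbert spaces, let $B:D(B)\subset H_1\to H$ be a linear unbounded operator and $B^*:D(B^* )\subset H\to H_1$ its adjoint. Assume there is $C>0$ with $\|B^*v\|_{H_1}\ge C\|v\|_H$ for all $v\in D(B^* )$, that $V:=D(B^* )$ is complete for the norm $\|B^*v\|_{H_1}$, and that $V$ is compactly embedded into $H$. Let $\mathcal{H}:=D(B^* )\times H\times L^2(0,1;H_1)$. Define $\mathcal{A}(u,v,z)=\big(v,\,-B(aB^*v+z(1)),\,-\tau^{-1}z_\rho\big)$ with domain $D(\mathcal{A})=\{(u,v,z)\in D(B^* )\times D(B^* )\times H^1(0,1;H_1):\ aB^*v+z(1)\in D(B),\ B^*u=z(0)\}$. *)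

theory Defs
  imports "HOL-Analysis.Analysis"
begin

text \<open>Real Hilbert spaces are types of class real_inner and complete_space.
  An unbounded operator B with domain DB is a function on the whole type
  whose values are only relevant on DB.\<close>

definition lin_op :: "'a::real_vector set \<Rightarrow> ('a \<Rightarrow> 'b::real_vector) \<Rightarrow> bool" where
  "lin_op D T \<longleftrightarrow> subspace D \<and>
     (\<forall>x\<in>D. \<forall>y\<in>D. T (x + y) = T x + T y) \<and>
     (\<forall>c. \<forall>x\<in>D. T (c *\<^sub>R x) = c *\<^sub>R T x)"

definition is_adjoint ::
  "'a::real_inner set \<Rightarrow> ('a \<Rightarrow> 'b::real_inner) \<Rightarrow> 'b set \<Rightarrow> ('b \<Rightarrow> 'a) \<Rightarrow> bool" where
  "is_adjoint DB B DBs Bs \<longleftrightarrow>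
     DBs = {v. \<exists>w. \<forall>u\<in>DB. inner (B u) v = inner u w} \<and>
     (\<forall>v\<in>DBs. \<forall>u\<in>DB. inner (B u) v = inner u (Bs v))"

text \<open>z belongs to H^1(0,1;H1) with (weak) derivative z': z' is square
  integrable on [0,1] and z is its primitive.\<close>
definition H1_pair :: "(real \<Rightarrow> 'a::real_normed_vector) \<Rightarrow> (real \<Rightarrow> 'a) \<Rightarrow> bool" where
  "H1_pair z z' \<longleftrightarrow> (\<lambda>s. (norm (z' s))\<^sup>2) integrable_on {0..1} \<and>
     (\<forall>\<rho>\<in>{0..1}. (z' has_integral (z \<rho> - z 0)) {0..\<rho>})"

text \<open>Domain of the operator A; an element is (u, v, z, z') with z' the
  derivative of z.\<close>
definition domA ::
  "'h1 set \<Rightarrow> ('h1 \<Rightarrow> 'h) \<Rightarrow> 'h set \<Rightarrow> ('h \<Rightarrow> 'h1) \<Rightarrow> real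
     \<Rightarrow> ('h \<times> 'h \<times> (real \<Rightarrow> 'h1::real_normed_vector) \<times> (real \<Rightarrow> 'h1)) set" where
  "domA DB B DBs Bs a = {(u, v, z, z'). u \<in> DBs \<and> v \<in> DBs \<and> H1_pair z z' \<and>
      a *\<^sub>R Bs v + z 1 \<in> DB \<and> Bs u = z 0}"

definition opA ::
  "('h1 \<Rightarrow> 'h::real_vector) \<Rightarrow> ('h \<Rightarrow> 'h1::real_vector) \<Rightarrow> real \<Rightarrow> real
     \<Rightarrow> ('h \<times> 'h \<times> (real \<Rightarrow> 'h1) \<times> (real \<Rightarrow> 'h1)) \<Rightarrow> ('h \<times> 'h \<times> (real \<Rightarrow> 'h1))" where
  "opA B Bs a \<tau> U = (case U of (u, v, z, z') \<Rightarrow>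
      (v, - B (a *\<^sub>R Bs v + z 1), (\<lambda>s. - (1 / \<tau>) *\<^sub>R z' s)))"

text \<open>Equality in the state space D(B*) x H x L^2(0,1;H1)
  (third component up to null sets).\<close>
definition st_eq :: "('h \<times> 'h \<times> (real \<Rightarrow> 'h1)) \<Rightarrow> ('h \<times> 'h \<times> (real \<Rightarrow> 'h1)) \<Rightarrow> bool" where
  "st_eq X Y = (case X of (u, v, f) \<Rightarrow> case Y of (u', v', g) \<Rightarrow>
      u = u' \<and> v = v' \<and> (AE s in lborel. s \<in> {0..1} \<longrightarrow> f s = g s))"

definition st_zero :: "'h::zero \<times> 'h \<times> (real \<Rightarrow> 'h1::zero) \<Rightarrow> bool" where
  "st_zero X = st_eq X (0, 0, (\<lambda>_. 0))"

definition st_lin :: "real \<Rightarrow> ('h::real_vector \<times> 'h \<times> (real \<Rightarrow> 'h1::real_vector))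
     \<Rightarrow> real \<Rightarrow> ('h \<times> 'h \<times> (real \<Rightarrow> 'h1)) \<Rightarrow> ('h \<times> 'h \<times> (real \<Rightarrow> 'h1))" where
  "st_lin c X d Y = (case X of (u, v, f) \<Rightarrow> case Y of (u', v', g) \<Rightarrow>
      (c *\<^sub>R u + d *\<^sub>R u', c *\<^sub>R v + d *\<^sub>R v', (\<lambda>s. c *\<^sub>R f s + d *\<^sub>R g s)))"

definition st_of :: "'h \<times> 'h \<times> (real \<Rightarrow> 'h1) \<times> (real \<Rightarrow> 'h1) \<Rightarrow> 'h \<times> 'h \<times> (real \<Rightarrow> 'h1)" where
  "st_of U = (case U of (u, v, z, z') \<Rightarrow> (u, v, z))"

text \<open>lambda = alpha + i beta is an eigenvalue of (the complexification of) A: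
  there is a nonzero U = U1 + i U2 with U1, U2 in D(A) and A U = lambda U.\<close>
definition is_eigenvalue_A ::
  "'h1::real_normed_vector set \<Rightarrow> ('h1 \<Rightarrow> 'h::real_normed_vector) \<Rightarrow> 'h set \<Rightarrow> ('h \<Rightarrow> 'h1)
     \<Rightarrow> real \<Rightarrow> real \<Rightarrow> complex \<Rightarrow> bool" where
  "is_eigenvalue_A DB B DBs Bs a \<tau> lam \<longleftrightarrow>
     (\<exists>U1 U2. U1 \<in> domA DB B DBs Bs a \<and> U2 \<in> domA DB B DBs Bs a \<and>
        \<not> (st_zero (st_of U1) \<and> st_zero (st_of U2)) \<and>
        st_eq (opA B Bs a \<tau> U1) (st_lin (Re lam) (st_of U1) (- Im lam) (st_of U2)) \<and>
        st_eq (opA B Bs a \<tau> U2) (st_lin (Im lam) (st_of U1) (Re lam) (st_of U2)))"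

end

theory Submission
  imports Defs
begin

text \<open>Let \<open>\<lambda> = \<alpha> + i\<beta>\<close> be an eigenvalue with complexified eigenvector \<open>(u, \<lambda>u, z)\<close>, and put
  \<open>p = B*u = z(0)\<close>. Pairing the boundary equation \<open>-B(aB*v + z(1)) = \<lambda>\<^sup>2u\<close> with \<open>u\<close> gives
  \<open>-\<lambda>\<^sup>2|u|\<^sup>2 = a\<lambda>|p|\<^sup>2 + \<langle>z(1), p\<rangle>\<close>. The scalar function \<open>S + iT = \<langle>z(\<rho>), p\<rangle>\<close> solves
  \<open>W' = -\<tau>\<lambda>W\<close>, \<open>W(0) = |p|\<^sup>2\<close>, so \<open>|W|\<close> is nonincreasing for \<open>\<alpha> \<ge> 0\<close>, whence \<open>\<integral>S \<le> |p|\<^sup>2\<close>.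
  Integrating the equation over \<open>[0,1]\<close>, the real part of \<open>\<lambda>\<close>-conjugate times the identity becomes
  \<open>|\<lambda>|\<^sup>2\<alpha>|u|\<^sup>2 + (a - \<tau>)|\<lambda>|\<^sup>2|p|\<^sup>2 + \<tau>|\<lambda>|\<^sup>2(|p|\<^sup>2 - \<integral>S) + \<alpha>|p|\<^sup>2 = 0\<close>.
  For \<open>\<alpha> \<ge> 0\<close> and \<open>\<tau> \<le> a\<close> all four terms are nonnegative, which forces \<open>p = 0\<close>; coercivity
  of \<open>B*\<close> then gives \<open>u = 0\<close>, and the decay of \<open>|W|\<close> for arbitrary pairings gives \<open>z = 0\<close>.\<close>

lemma AE_lborel_obtain_negligible:
  assumes "AE s in lborel. P s"
  obtains N where "negligible N" "\<And>s. s \<notin> N \<Longrightarrow> P s"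
proof -
  from assms obtain N where N: "N \<in> null_sets lborel" "{s \<in> space lborel. \<not> P s} \<subseteq> N"
    by (auto simp: eventually_ae_filter)
  have "negligible N"
    using N(1) by (simp add: negligible_iff_null_sets null_sets_completionI)
  with N(2) show ?thesis
    using that by auto
qed

lemma primitive_eq_integral:
  assumes "\<forall>t\<in>{a..b}. (f has_integral F t - F a) {a..t}" "t \<in> {a..b}"
  shows "F t = F a + integral {a..t} f"
  using integral_unique[OF assms(1)[rule_format, OF assms(2)]] by simp

lemma primitive_continuous_on:
  fixes F f :: "real \<Rightarrow> 'a::banach"
  assumes "\<forall>t\<in>{a..b}. (f has_integral F t - F a) {a..t}"
  shows "continuous_on {a..b} F"
proof (cases "a \<le> b")
  case True
  then have "f integrable_on {a..b}"
    using assms by auto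
  then have "continuous_on {a..b} (\<lambda>t. F a + integral {a..t} f)"
    by (intro continuous_on_add continuous_on_const indefinite_integral_continuous_1)
  then show ?thesis
    by (rule continuous_on_eq) (rule primitive_eq_integral[OF assms, symmetric])
qed simp

lemma primitive_has_vector_derivative:
  fixes F f :: "real \<Rightarrow> 'a::banach"
  assumes "continuous_on {a..b} f" "\<forall>t\<in>{a..b}. (f has_integral F t - F a) {a..t}"
    and x: "x \<in> {a..b}"
  shows "(F has_vector_derivative f x) (at x within {a..b})"
proof -
  have "((\<lambda>t. F a + integral {a..t} f) has_vector_derivative f x) (at x within {a..b})"
    using integral_has_vector_derivative[OF assms(1) x]
    by (subst add.commute) (simp add: has_vector_derivative_add_const)
  then show ?thesis
    by (rule has_vector_derivative_transform[OF x, rotated]) (rule primitive_eq_integral[OF assms(2)])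
qed

lemma primitive_AE_cong:
  fixes F f g :: "real \<Rightarrow> 'a::real_normed_vector"
  assumes "\<forall>t\<in>{a..b}. (f has_integral F t - F a) {a..t}"
    and "AE s in lborel. s \<in> {a..b} \<longrightarrow> f s = g s"
  shows "\<forall>t\<in>{a..b}. (g has_integral F t - F a) {a..t}"
proof
  fix t assume t: "t \<in> {a..b}"
  obtain N where "negligible N" "\<And>s. s \<notin> N \<Longrightarrow> s \<in> {a..b} \<longrightarrow> f s = g s"
    using AE_lborel_obtain_negligible[OF assms(2)] by blast
  then show "(g has_integral F t - F a) {a..t}"
    by (intro has_integral_spike[OF _ _ assms(1)[rule_format, OF t]]) (use t in auto)
qed

text \<open>\<open>X + iY\<close> solves \<open>W' = -\<tau>(\<alpha> + i\<beta>)W\<close> on \<open>[0,1]\<close>, in integrated form.\<close>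

definition damped_rotation :: "real \<Rightarrow> real \<Rightarrow> real \<Rightarrow> (real \<Rightarrow> real) \<Rightarrow> (real \<Rightarrow> real) \<Rightarrow> bool" where
  "damped_rotation \<tau> \<alpha> \<beta> X Y \<longleftrightarrow>
     (\<forall>\<rho>\<in>{0..1}. ((\<lambda>s. - \<tau> * (\<alpha> * X s - \<beta> * Y s)) has_integral X \<rho> - X 0) {0..\<rho>}) \<and>
     (\<forall>\<rho>\<in>{0..1}. ((\<lambda>s. - \<tau> * (\<beta> * X s + \<alpha> * Y s)) has_integral Y \<rho> - Y 0) {0..\<rho>})"

lemma damped_rotation_continuous_on:
  assumes "damped_rotation \<tau> \<alpha> \<beta> X Y"
  shows "continuous_on {0..1} X" "continuous_on {0..1} Y"
  using assms primitive_continuous_on unfolding damped_rotation_def by blast+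

lemma damped_rotation_energy_decay:
  assumes rot: "damped_rotation \<tau> \<alpha> \<beta> X Y" and damped: "\<tau> * \<alpha> \<ge> 0"
    and \<rho>: "\<rho> \<in> {0..1}"
  shows "(X \<rho>)\<^sup>2 + (Y \<rho>)\<^sup>2 \<le> (X 0)\<^sup>2 + (Y 0)\<^sup>2"
proof -
  define E where "E = (\<lambda>s. (X s)\<^sup>2 + (Y s)\<^sup>2)"
  have cont: "continuous_on {0..1} X" "continuous_on {0..1} Y"
    using damped_rotation_continuous_on[OF rot] by blast+
  have "(E has_vector_derivative - (2 * (\<tau> * \<alpha> * E s))) (at s within {0..\<rho>})"
    if s: "s \<in> {0..\<rho>}" for s
  proof -
    have s01: "s \<in> {0..1}" and sub: "{0..\<rho>} \<subseteq> {0..1}" using s \<rho> by auto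
    have "(X has_vector_derivative - \<tau> * (\<alpha> * X s - \<beta> * Y s)) (at s within {0..1})"
      "(Y has_vector_derivative - \<tau> * (\<beta> * X s + \<alpha> * Y s)) (at s within {0..1})"
      using rot s01 cont unfolding damped_rotation_def
      by (auto intro!: primitive_has_vector_derivative continuous_intros)
    then have "(E has_vector_derivative
        2 * X s * (- \<tau> * (\<alpha> * X s - \<beta> * Y s)) + 2 * Y s * (- \<tau> * (\<beta> * X s + \<alpha> * Y s)))
        (at s within {0..1})"
      unfolding E_def power2_eq_square by (auto intro!: derivative_eq_intros)
    then show ?thesis
      by (rule has_vector_derivative_within_subset[OF _ sub, THEN has_vector_derivative_eq_rhs])
        (simp add: E_def algebra_simps power2_eq_square)
  qed
  then have "((\<lambda>s. - (2 * (\<tau> * \<alpha> * E s))) has_integral E \<rho> - E 0) {0..\<rho>}"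
    using \<rho> by (intro fundamental_theorem_of_calculus) auto
  moreover have "- (2 * (\<tau> * \<alpha> * E s)) \<le> 0" for s
    using mult_nonneg_nonneg[OF damped, of "E s"] by (simp add: E_def)
  ultimately have "E \<rho> - E 0 \<le> 0"
    by (rule has_integral_le[OF _ has_integral_0])
  then show ?thesis unfolding E_def by simp
qed

lemma damped_rotation_at_1:
  assumes rot: "damped_rotation \<tau> \<alpha> \<beta> X Y"
  shows "X 1 - X 0 = - \<tau> * (\<alpha> * integral {0..1} X - \<beta> * integral {0..1} Y)"
    and "Y 1 - Y 0 = - \<tau> * (\<beta> * integral {0..1} X + \<alpha> * integral {0..1} Y)"
proof -
  have "(X has_integral integral {0..1} X) {0..1}" "(Y has_integral integral {0..1} Y) {0..1}"
    using damped_rotation_continuous_on[OF rot] by (auto intro: integrable_continuous_real)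
  then have "((\<lambda>s. - \<tau> * (\<alpha> * X s - \<beta> * Y s)) has_integral
                - \<tau> * (\<alpha> * integral {0..1} X - \<beta> * integral {0..1} Y)) {0..1}"
    and "((\<lambda>s. - \<tau> * (\<beta> * X s + \<alpha> * Y s)) has_integral
                - \<tau> * (\<beta> * integral {0..1} X + \<alpha> * integral {0..1} Y)) {0..1}"
    by (auto intro!: has_integral_neg has_integral_mult_right has_integral_diff has_integral_add)
  with rot show "X 1 - X 0 = - \<tau> * (\<alpha> * integral {0..1} X - \<beta> * integral {0..1} Y)"
    and "Y 1 - Y 0 = - \<tau> * (\<beta> * integral {0..1} X + \<alpha> * integral {0..1} Y)"
    unfolding damped_rotation_def by (auto dest: has_integral_unique)
qed

lemma damped_rotation_le_start:
  assumes "damped_rotation \<tau> \<alpha> \<beta> X Y" "\<tau> * \<alpha> \<ge> 0" "Y 0 = 0" "\<rho> \<in> {0..1}"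
  shows "X \<rho> \<le> \<bar>X 0\<bar>"
proof -
  have "(X \<rho>)\<^sup>2 + (Y \<rho>)\<^sup>2 \<le> (X 0)\<^sup>2"
    using damped_rotation_energy_decay[OF assms(1,2,4)] assms(3) by simp
  then have "(X \<rho>)\<^sup>2 \<le> (X 0)\<^sup>2"
    by (smt (verit) zero_le_power2)
  then show ?thesis
    by (metis abs_ge_self abs_le_square_iff order_trans)
qed

lemma damped_rotation_mean_le:
  assumes "damped_rotation \<tau> \<alpha> \<beta> X Y" "\<tau> * \<alpha> \<ge> 0" "Y 0 = 0" "X 0 \<ge> 0"
  shows "integral {0..1} X \<le> X 0"
proof -
  have "(X has_integral integral {0..1} X) {0..1}"
    using damped_rotation_continuous_on[OF assms(1)] by (auto intro: integrable_continuous_real)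
  then show ?thesis
    using has_integral_le[OF _ has_integral_const_real[of "X 0" 0 1]]
      damped_rotation_le_start[OF assms(1-3)] assms(4) by force
qed

lemma damped_rotation_mean_eq_imp_vanishes_at_1:
  assumes rot: "damped_rotation \<tau> \<alpha> \<beta> X Y" and damped: "\<tau> * \<alpha> \<ge> 0"
    and "Y 0 = 0" "X 0 \<ge> 0" and mean: "integral {0..1} X = X 0"
  shows "Y 1 = 0"
proof -
  have cont: "continuous_on {0..1} X"
    using damped_rotation_continuous_on[OF rot] by blast
  have "((\<lambda>s. X 0 - X s) has_integral 0) (cbox 0 1)"
    using has_integral_diff[OF has_integral_const_real[of "X 0" 0 1]
        integrable_integral[OF integrable_continuous_real[OF cont]]] mean
    by (simp add: cbox_interval)
  then have "X 0 - X 1 = 0"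
    using damped_rotation_le_start[OF rot damped \<open>Y 0 = 0\<close>] \<open>X 0 \<ge> 0\<close> cont
    by (intro has_integral_0_cbox_imp_0[where f = "\<lambda>s. X 0 - X s"])
      (auto intro!: continuous_intros simp: cbox_interval box_real)
  then show "Y 1 = 0"
    using damped_rotation_energy_decay[OF rot damped, of 1] \<open>Y 0 = 0\<close> by simp
qed

lemma damped_rotation_balance_imp_zero:
  assumes rot: "damped_rotation \<tau> \<alpha> \<beta> S T"
    and S0: "S 0 = P" and T0: "T 0 = 0" and "P \<ge> 0" "U \<ge> 0" "\<alpha> \<ge> 0" "0 < \<tau>" "\<tau> \<le> a"
    and re: "- (\<alpha>\<^sup>2 - \<beta>\<^sup>2) * U = a * \<alpha> * P + S 1"
    and im: "- 2 * \<alpha> * \<beta> * U = a * \<beta> * P + T 1"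
  shows "P = 0"
proof (rule ccontr)
  assume "P \<noteq> 0"
  with \<open>P \<ge> 0\<close> have "P > 0" by simp
  define L where "L = \<alpha>\<^sup>2 + \<beta>\<^sup>2"
  define IS where "IS = integral {0..1} S"
  define IT where "IT = integral {0..1} T"
  have damped: "\<tau> * \<alpha> \<ge> 0" using \<open>\<alpha> \<ge> 0\<close> \<open>0 < \<tau>\<close> by simp
  have IS_le: "IS \<le> P"
    unfolding IS_def using damped_rotation_mean_le[OF rot damped] S0 T0 \<open>P \<ge> 0\<close> by simp
  have S1: "S 1 = P - \<tau> * (\<alpha> * IS - \<beta> * IT)" and T1: "T 1 = - \<tau> * (\<beta> * IS + \<alpha> * IT)"
    using damped_rotation_at_1[OF rot] S0 T0 unfolding IS_def IT_def by simp_all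
  have "\<alpha> * S 1 + \<beta> * T 1 = \<alpha> * P - \<tau> * L * IS"
    unfolding S1 T1 L_def by algebra
  moreover have "- (L * \<alpha> * U) = a * L * P + (\<alpha> * S 1 + \<beta> * T 1)"
    using re im unfolding L_def by algebra
  ultimately have balance: "L * \<alpha> * U + (a - \<tau>) * L * P + \<tau> * L * (P - IS) + \<alpha> * P = 0"
    by algebra
  have "L \<ge> 0" unfolding L_def by simp
  then have "0 \<le> L * \<alpha> * U" "0 \<le> (a - \<tau>) * L * P" "0 \<le> \<tau> * L * (P - IS)"
    using IS_le \<open>U \<ge> 0\<close> \<open>\<alpha> \<ge> 0\<close> \<open>0 < \<tau>\<close> \<open>\<tau> \<le> a\<close> \<open>P \<ge> 0\<close> by simp_all
  moreover have "0 \<le> \<alpha> * P" using \<open>\<alpha> \<ge> 0\<close> \<open>P \<ge> 0\<close> by simp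
  ultimately have "\<alpha> * P = 0" and IS_eq: "\<tau> * L * (P - IS) = 0"
    using balance by linarith+
  with \<open>P > 0\<close> have "\<alpha> = 0" by simp
  show False
  proof (cases "\<beta> = 0")
    case True
    then show False
      using re damped_rotation_at_1(1)[OF rot] S0 \<open>\<alpha> = 0\<close> \<open>P > 0\<close> by simp
  next
    case False
    then have "L > 0" unfolding L_def by (simp add: sum_power2_gt_zero_iff)
    then have "integral {0..1} S = S 0"
      using IS_eq \<open>0 < \<tau>\<close> S0 unfolding IS_def by simp
    then have "T 1 = 0"
      using damped_rotation_mean_eq_imp_vanishes_at_1[OF rot damped T0] S0 \<open>P \<ge> 0\<close> by simp
    then show False
      using im \<open>\<alpha> = 0\<close> False \<open>P > 0\<close> \<open>0 < \<tau>\<close> \<open>\<tau> \<le> a\<close> by simp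
  qed
qed

lemma H1_pair_inner_has_integral:
  fixes z z' :: "real \<Rightarrow> 'a::real_inner"
  assumes "H1_pair z z'" "\<rho> \<in> {0..1}"
  shows "((\<lambda>s. inner (z' s) c) has_integral inner (z \<rho>) c - inner (z 0) c) {0..\<rho>}"
  using has_integral_linear[OF _ bounded_linear_inner_left[of c], of z' "z \<rho> - z 0"] assms
  by (simp add: H1_pair_def o_def inner_diff_left)

lemma H1_pair_inner_damped_rotation:
  fixes z1 z2 z1' z2' :: "real \<Rightarrow> 'a::real_inner"
  assumes H1: "H1_pair z1 z1'" "H1_pair z2 z2'" and "\<tau> \<noteq> 0"
    and ode1: "AE s in lborel. s \<in> {0..1} \<longrightarrow>
      - (1 / \<tau>) *\<^sub>R z1' s = \<alpha> *\<^sub>R z1 s + - \<beta> *\<^sub>R z2 s"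
    and ode2: "AE s in lborel. s \<in> {0..1} \<longrightarrow>
      - (1 / \<tau>) *\<^sub>R z2' s = \<beta> *\<^sub>R z1 s + \<alpha> *\<^sub>R z2 s"
  shows "damped_rotation \<tau> \<alpha> \<beta>
    (\<lambda>s. inner (z1 s) c1 + inner (z2 s) c2) (\<lambda>s. inner (z2 s) c1 - inner (z1 s) c2)"
    (is "damped_rotation \<tau> \<alpha> \<beta> ?X ?Y")
  \<comment> \<open>\<open>?X + i?Y\<close> is the complex pairing of \<open>z1 + iz2\<close> with \<open>c1 + ic2\<close>\<close>
proof -
  have solve: "z' = - \<tau> *\<^sub>R w" if "- (1 / \<tau>) *\<^sub>R z' = w" for z' w :: 'a
    unfolding that[symmetric] using \<open>\<tau> \<noteq> 0\<close> by simp
  have "AE s in lborel. s \<in> {0..1} \<longrightarrow> z1' s = - \<tau> *\<^sub>R (\<alpha> *\<^sub>R z1 s + - \<beta> *\<^sub>R z2 s) \<and>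
      z2' s = - \<tau> *\<^sub>R (\<beta> *\<^sub>R z1 s + \<alpha> *\<^sub>R z2 s)"
    using ode1 ode2 by eventually_elim (use solve in blast)
  moreover have "inner (z1' s) c1 + inner (z2' s) c2 = - \<tau> * (\<alpha> * ?X s - \<beta> * ?Y s) \<and>
      inner (z2' s) c1 - inner (z1' s) c2 = - \<tau> * (\<beta> * ?X s + \<alpha> * ?Y s)"
    if "z1' s = - \<tau> *\<^sub>R (\<alpha> *\<^sub>R z1 s + - \<beta> *\<^sub>R z2 s)"
      "z2' s = - \<tau> *\<^sub>R (\<beta> *\<^sub>R z1 s + \<alpha> *\<^sub>R z2 s)" for s
    unfolding that by (simp add: inner_add_left inner_diff_left algebra_simps)
  ultimately have ae1: "AE s in lborel. s \<in> {0..1} \<longrightarrow>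
        inner (z1' s) c1 + inner (z2' s) c2 = - \<tau> * (\<alpha> * ?X s - \<beta> * ?Y s)"
    and ae2: "AE s in lborel. s \<in> {0..1} \<longrightarrow>
        inner (z2' s) c1 - inner (z1' s) c2 = - \<tau> * (\<beta> * ?X s + \<alpha> * ?Y s)"
    by (auto elim!: eventually_mono)
  have prim1: "\<forall>\<rho>\<in>{0..1}.
      ((\<lambda>s. inner (z1' s) c1 + inner (z2' s) c2) has_integral ?X \<rho> - ?X 0) {0..\<rho>}"
    using has_integral_add[OF H1_pair_inner_has_integral[OF H1(1)] H1_pair_inner_has_integral[OF H1(2)]]
    by (simp add: algebra_simps)
  have prim2: "\<forall>\<rho>\<in>{0..1}.
      ((\<lambda>s. inner (z2' s) c1 - inner (z1' s) c2) has_integral ?Y \<rho> - ?Y 0) {0..\<rho>}"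
    using has_integral_diff[OF H1_pair_inner_has_integral[OF H1(2)] H1_pair_inner_has_integral[OF H1(1)]]
    by (simp add: algebra_simps)
  show ?thesis
    unfolding damped_rotation_def
    using primitive_AE_cong[OF prim1 ae1] primitive_AE_cong[OF prim2 ae2] by blast
qed

lemma H1_pair_damped_rotation_vanishes:
  fixes z1 z2 z1' z2' :: "real \<Rightarrow> 'a::real_inner"
  assumes H1: "H1_pair z1 z1'" "H1_pair z2 z2'" and "\<tau> \<noteq> 0" and damped: "\<tau> * \<alpha> \<ge> 0"
    and ode1: "AE s in lborel. s \<in> {0..1} \<longrightarrow>
      - (1 / \<tau>) *\<^sub>R z1' s = \<alpha> *\<^sub>R z1 s + - \<beta> *\<^sub>R z2 s"
    and ode2: "AE s in lborel. s \<in> {0..1} \<longrightarrow>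
      - (1 / \<tau>) *\<^sub>R z2' s = \<beta> *\<^sub>R z1 s + \<alpha> *\<^sub>R z2 s"
    and "z1 0 = 0" "z2 0 = 0" "\<rho> \<in> {0..1}"
  shows "z1 \<rho> = 0" "z2 \<rho> = 0"
proof -
  have "inner (z1 \<rho>) c = 0 \<and> inner (z2 \<rho>) c = 0" for c
  proof -
    have "damped_rotation \<tau> \<alpha> \<beta> (\<lambda>s. inner (z1 s) c) (\<lambda>s. inner (z2 s) c)"
      using H1_pair_inner_damped_rotation[OF H1 \<open>\<tau> \<noteq> 0\<close> ode1 ode2, of c 0] by simp
    from damped_rotation_energy_decay[OF this damped \<open>\<rho> \<in> {0..1}\<close>]
    show ?thesis
      using \<open>z1 0 = 0\<close> \<open>z2 0 = 0\<close> by (simp add: sum_power2_le_zero_iff)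
  qed
  then show "z1 \<rho> = 0" "z2 \<rho> = 0"
    by (metis inner_eq_zero_iff)+
qed

lemma dense_inner_eq:
  fixes x y :: "'a::real_inner"
  assumes "closure D = UNIV" and "\<And>u. u \<in> D \<Longrightarrow> inner u x = inner u y"
  shows "x = y"
proof -
  have "\<And>u. u \<in> D \<Longrightarrow> inner u (x - y) = 0"
    using assms(2) by (simp add: inner_diff_right)
  moreover have "continuous_on (closure D) (\<lambda>u. inner u (x - y))"
    by (intro continuous_intros)
  ultimately have "inner (x - y) (x - y) = 0"
    using continuous_constant_on_closure[of D "\<lambda>u. inner u (x - y)" 0 "x - y"] assms(1) by simp
  then show ?thesis by simp
qed

lemma is_adjointD:
  "is_adjoint DB B DBs Bs \<Longrightarrow> v \<in> DBs \<Longrightarrow> u \<in> DB \<Longrightarrow> inner (B u) v = inner u (Bs v)"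
  unfolding is_adjoint_def by blast

lemma is_adjoint_lincomb:
  assumes adj: "is_adjoint DB B DBs Bs" and dense: "closure DB = UNIV"
    and "x \<in> DBs" "y \<in> DBs"
  shows "Bs (c *\<^sub>R x + d *\<^sub>R y) = c *\<^sub>R Bs x + d *\<^sub>R Bs y"
proof -
  have inner_lincomb: "inner (B u) (c *\<^sub>R x + d *\<^sub>R y) = inner u (c *\<^sub>R Bs x + d *\<^sub>R Bs y)"
    if "u \<in> DB" for u
    using is_adjointD[OF adj \<open>x \<in> DBs\<close> that] is_adjointD[OF adj \<open>y \<in> DBs\<close> that]
    by (simp add: inner_add_right)
  then have "c *\<^sub>R x + d *\<^sub>R y \<in> DBs"
    using adj unfolding is_adjoint_def by blast
  then show ?thesis
    using dense inner_lincomb is_adjointD[OF adj] by (metis dense_inner_eq)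
qed

text \<open>Real and imaginary parts of \<open>-\<lambda>\<^sup>2|u|\<^sup>2 = \<langle>Bw, u\<rangle> = \<langle>w, B*u\<rangle> = a\<lambda>|B*u|\<^sup>2 + \<langle>q, B*u\<rangle>\<close> for
  \<open>\<lambda> = \<alpha> + i\<beta>\<close>, \<open>u = u1 + iu2\<close>, \<open>v = \<lambda>u\<close>, \<open>-Bw = \<lambda>v\<close> and \<open>w = aB*v + q\<close>.\<close>

lemma adjoint_eigen_balance:
  fixes u1 u2 v1 v2 :: "'h::real_inner" and w1 w2 q1 q2 :: "'h1::real_inner"
  assumes adj: "is_adjoint DB B DBs Bs" and dense: "closure DB = UNIV"
    and u: "u1 \<in> DBs" "u2 \<in> DBs" and w: "w1 \<in> DB" "w2 \<in> DB"
    and v1: "v1 = \<alpha> *\<^sub>R u1 + - \<beta> *\<^sub>R u2" and v2: "v2 = \<beta> *\<^sub>R u1 + \<alpha> *\<^sub>R u2"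
    and Bw1: "- B w1 = \<alpha> *\<^sub>R v1 + - \<beta> *\<^sub>R v2" and Bw2: "- B w2 = \<beta> *\<^sub>R v1 + \<alpha> *\<^sub>R v2"
    and w1_eq: "w1 = a *\<^sub>R Bs v1 + q1" and w2_eq: "w2 = a *\<^sub>R Bs v2 + q2"
  defines "p1 \<equiv> Bs u1" and "p2 \<equiv> Bs u2"
  shows "- (\<alpha>\<^sup>2 - \<beta>\<^sup>2) * (inner u1 u1 + inner u2 u2)
           = a * \<alpha> * (inner p1 p1 + inner p2 p2) + (inner q1 p1 + inner q2 p2)"
    and "- 2 * \<alpha> * \<beta> * (inner u1 u1 + inner u2 u2)
           = a * \<beta> * (inner p1 p1 + inner p2 p2) + (inner q2 p1 - inner q1 p2)"
proof -
  have Bsv1: "Bs v1 = \<alpha> *\<^sub>R p1 + - \<beta> *\<^sub>R p2" and Bsv2: "Bs v2 = \<beta> *\<^sub>R p1 + \<alpha> *\<^sub>R p2"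
    unfolding v1 v2 p1_def p2_def by (rule is_adjoint_lincomb[OF adj dense u])+
  have Bw1': "B w1 = - (\<alpha> *\<^sub>R v1 + - \<beta> *\<^sub>R v2)" and Bw2': "B w2 = - (\<beta> *\<^sub>R v1 + \<alpha> *\<^sub>R v2)"
    using arg_cong[OF Bw1, of uminus] arg_cong[OF Bw2, of uminus] by simp_all
  have "inner (B w1) u1 + inner (B w2) u2 = inner w1 p1 + inner w2 p2"
    and "inner (B w2) u1 - inner (B w1) u2 = inner w2 p1 - inner w1 p2"
    unfolding p1_def p2_def using is_adjointD[OF adj] u w by simp_all
  moreover have
      "inner (B w1) u1 + inner (B w2) u2 = - (\<alpha>\<^sup>2 - \<beta>\<^sup>2) * (inner u1 u1 + inner u2 u2)"
    and "inner (B w2) u1 - inner (B w1) u2 = - 2 * \<alpha> * \<beta> * (inner u1 u1 + inner u2 u2)"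
    unfolding Bw1' Bw2' v1 v2
    by (simp_all add: inner_add_left inner_add_right inner_commute[of u2 u1] algebra_simps
        power2_eq_square)
  moreover have
      "inner w1 p1 + inner w2 p2 = a * \<alpha> * (inner p1 p1 + inner p2 p2) + (inner q1 p1 + inner q2 p2)"
    and
      "inner w2 p1 - inner w1 p2 = a * \<beta> * (inner p1 p1 + inner p2 p2) + (inner q2 p1 - inner q1 p2)"
    unfolding w1_eq w2_eq Bsv1 Bsv2
    by (simp_all add: inner_add_left inner_add_right inner_commute[of p2 p1] algebra_simps)
  ultimately show "- (\<alpha>\<^sup>2 - \<beta>\<^sup>2) * (inner u1 u1 + inner u2 u2)
           = a * \<alpha> * (inner p1 p1 + inner p2 p2) + (inner q1 p1 + inner q2 p2)"
    and "- 2 * \<alpha> * \<beta> * (inner u1 u1 + inner u2 u2)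
           = a * \<beta> * (inner p1 p1 + inner p2 p2) + (inner q2 p1 - inner q1 p2)"
    by simp_all
qed

lemma eigen_components_vanish:
  fixes u1 u2 v1 v2 :: "'h::real_inner" and z1 z2 z1' z2' :: "real \<Rightarrow> 'h1::real_inner"
  assumes adj: "is_adjoint DB B DBs Bs" and dense: "closure DB = UNIV"
    and coercive: "\<forall>v\<in>DBs. norm (Bs v) \<ge> C * norm v" and "C > 0"
    and "0 < \<tau>" "\<tau> \<le> a" "\<alpha> \<ge> 0"
    and u: "u1 \<in> DBs" "u2 \<in> DBs" and H1: "H1_pair z1 z1'" "H1_pair z2 z2'"
    and w: "a *\<^sub>R Bs v1 + z1 1 \<in> DB" "a *\<^sub>R Bs v2 + z2 1 \<in> DB"
    and trace: "Bs u1 = z1 0" "Bs u2 = z2 0"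
    and v1: "v1 = \<alpha> *\<^sub>R u1 + - \<beta> *\<^sub>R u2" and v2: "v2 = \<beta> *\<^sub>R u1 + \<alpha> *\<^sub>R u2"
    and Bw1: "- B (a *\<^sub>R Bs v1 + z1 1) = \<alpha> *\<^sub>R v1 + - \<beta> *\<^sub>R v2"
    and Bw2: "- B (a *\<^sub>R Bs v2 + z2 1) = \<beta> *\<^sub>R v1 + \<alpha> *\<^sub>R v2"
    and ode1: "AE s in lborel. s \<in> {0..1} \<longrightarrow>
      - (1 / \<tau>) *\<^sub>R z1' s = \<alpha> *\<^sub>R z1 s + - \<beta> *\<^sub>R z2 s"
    and ode2: "AE s in lborel. s \<in> {0..1} \<longrightarrow>
      - (1 / \<tau>) *\<^sub>R z2' s = \<beta> *\<^sub>R z1 s + \<alpha> *\<^sub>R z2 s"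
  shows "u1 = 0 \<and> u2 = 0 \<and> v1 = 0 \<and> v2 = 0 \<and> (\<forall>\<rho>\<in>{0..1}. z1 \<rho> = 0 \<and> z2 \<rho> = 0)"
proof -
  define P where "P = inner (Bs u1) (Bs u1) + inner (Bs u2) (Bs u2)"
  have rot: "damped_rotation \<tau> \<alpha> \<beta> (\<lambda>s. inner (z1 s) (Bs u1) + inner (z2 s) (Bs u2))
      (\<lambda>s. inner (z2 s) (Bs u1) - inner (z1 s) (Bs u2))"
    using H1_pair_inner_damped_rotation[OF H1 _ ode1 ode2] \<open>0 < \<tau>\<close> by simp
  have S0: "inner (z1 0) (Bs u1) + inner (z2 0) (Bs u2) = P"
    unfolding P_def trace ..
  have T0: "inner (z2 0) (Bs u1) - inner (z1 0) (Bs u2) = 0"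
    unfolding trace by (simp add: inner_commute)
  note balance = adjoint_eigen_balance[OF adj dense u w v1 v2 Bw1 Bw2 refl refl]
  have "P = 0"
    by (rule damped_rotation_balance_imp_zero[OF rot S0 T0,
          where U = "inner u1 u1 + inner u2 u2" and a = a])
      (use balance \<open>\<alpha> \<ge> 0\<close> \<open>0 < \<tau>\<close> \<open>\<tau> \<le> a\<close> in \<open>simp_all add: P_def\<close>)
  then have "Bs u1 = 0" "Bs u2 = 0"
    unfolding P_def by (metis add_nonneg_eq_0_iff inner_eq_zero_iff inner_ge_zero)+
  moreover have "u = 0" if "u \<in> DBs" "Bs u = 0" for u
  proof -
    have "C * norm u \<le> 0" using coercive that by force
    then show ?thesis using \<open>C > 0\<close> by (simp add: mult_le_0_iff)
  qed
  ultimately have "u1 = 0" "u2 = 0"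
    using u by blast+
  moreover have "z1 \<rho> = 0 \<and> z2 \<rho> = 0" if "\<rho> \<in> {0..1}" for \<rho>
    using H1_pair_damped_rotation_vanishes[OF H1 _ _ ode1 ode2 _ _ that] \<open>Bs u1 = 0\<close> \<open>Bs u2 = 0\<close>
      trace \<open>0 < \<tau>\<close> \<open>\<alpha> \<ge> 0\<close> by simp
  ultimately show ?thesis
    using v1 v2 by simp
qed

theorem lemma3p1:
  fixes DB :: "'h1::{real_inner, complete_space} set"
    and B :: "'h1 \<Rightarrow> 'h::{real_inner, complete_space}"
    and DBs :: "'h set" and Bs :: "'h \<Rightarrow> 'h1"
    and C a \<tau> :: real and lam :: complex
  assumes B_lin: "lin_op DB B"
    and B_dense: "closure DB = UNIV"
    and adj: "is_adjoint DB B DBs Bs"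
    and C_pos: "C > 0"
    and coercive: "\<forall>v\<in>DBs. norm (Bs v) \<ge> C * norm v"
    and V_complete: "\<forall>X. (\<forall>n. X n \<in> DBs) \<and>
        (\<forall>e>0. \<exists>N. \<forall>m\<ge>N. \<forall>n\<ge>N. norm (Bs (X m - X n)) < e)
        \<longrightarrow> (\<exists>x\<in>DBs. (\<lambda>n. norm (Bs (X n - x))) \<longlonglongrightarrow> 0)"
    and V_compact: "\<forall>X::nat \<Rightarrow> 'h. (\<forall>n. X n \<in> DBs) \<and> (\<exists>M. \<forall>n. norm (Bs (X n)) \<le> M)
        \<longrightarrow> (\<exists>r x. strict_mono r \<and> (X \<circ> r) \<longlonglongrightarrow> x)"
    and a_pos: "a > 0" and tau_pos: "\<tau> > 0" and tau_le: "\<tau> \<le> a"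
    and eig: "is_eigenvalue_A DB B DBs Bs a \<tau> lam"
  shows "Re lam < 0"
proof (rule ccontr)
  assume "\<not> Re lam < 0"
  obtain U1 U2 where dom: "U1 \<in> domA DB B DBs Bs a" "U2 \<in> domA DB B DBs Bs a"
    and nontrivial: "\<not> (st_zero (st_of U1) \<and> st_zero (st_of U2))"
    and eq1: "st_eq (opA B Bs a \<tau> U1) (st_lin (Re lam) (st_of U1) (- Im lam) (st_of U2))"
    and eq2: "st_eq (opA B Bs a \<tau> U2) (st_lin (Im lam) (st_of U1) (Re lam) (st_of U2))"
    using eig unfolding is_eigenvalue_A_def by blast
  obtain u1 v1 z1 z1' u2 v2 z2 z2' where U: "U1 = (u1, v1, z1, z1')" "U2 = (u2, v2, z2, z2')"
    using prod_cases4 by metis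
  have "u1 = 0 \<and> u2 = 0 \<and> v1 = 0 \<and> v2 = 0 \<and> (\<forall>\<rho>\<in>{0..1}. z1 \<rho> = 0 \<and> z2 \<rho> = 0)"
    by (rule eigen_components_vanish[OF adj B_dense coercive C_pos tau_pos tau_le])
      (use \<open>\<not> Re lam < 0\<close> dom eq1 eq2 in
        \<open>auto simp: U domA_def st_eq_def opA_def st_lin_def st_of_def\<close>)
  then show False
    using nontrivial by (auto simp: U st_zero_def st_eq_def st_of_def intro: AE_I2)
qed

end
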